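(* Let $G=(V,E)$ be a connected undirected unweighted graph in which every node has a self-loop, let $S\subseteq V$, and let $X\subseteq V$ be a configuration with $X\cap S\neq\emptyset$. Then $\operatorname{fp}^{\infty}(G^S,X)=1$.
   Context: Positional Voter model. A graph $G=(V,E,w)$ has node set $V$ with $|V|=n$, edge set $E\subseteq V\times V$ and weights $w\colon E\to\mathbb{R}_{>0}$; $\operatorname{in}(u)=\{v\in V:(v,u)\in E\}$. "Undirected unweighted" means $E$ is symmetric and $w\equiv 1$; "self-loop at $u$" means $(u,u)\in E$. A configuration is a set $X\subseteq V$ (the nodes carrying the novel trait $A$). Given a biased set $S\subseteq V$ and bias $\delta\ge 0$, define $f^S_X(v\mid u)=1+\delta$ if $v\in X$ and $u\in S$, and $1$ otherwise. The process $(\mathcal{X}_t)_{t\ge0}$: given $\mathcal{X}_t=X$, a node $u$ is chosen uniformly at random from $V$, then $v\in\operatorname{in}(u)$ is chosen with probability $\frac{f^S_X(v\mid u)\,w(v,u)}{\sum_{x\in\operatorname{in}(u)} f^S_X(x\mid u)\,w(x,u)}$, and $\mathcal{X}_{t+1}=X\cup\{u\}$ if $v\in X$, $\mathcal{X}_{t+1}=X\setminus\{u\}$ otherwise. Define $\operatorname{fp}(G^S,\delta,X)=\mathbb{P}[\exists t\ge0:\mathcal{X}_t=V\mid\mathcal{X}_0=X]$ and $\operatorname{fp}^{\infty}(G^S,X)=\lim_{\delta\to\infty}\operatorname{fp}(G^S,\delta,X)$. *)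

theory Defs
  imports Complex_Main
begin

text \<open>Positional Voter model on a graph G = (V, E, w) with node set V,
edge set E (pairs (v,u) meaning an edge from v to u) and weights w.\<close>

definition in_nbrs :: "'a set \<Rightarrow> ('a \<times> 'a) set \<Rightarrow> 'a \<Rightarrow> 'a set" where
  "in_nbrs V E u = {v \<in> V. (v, u) \<in> E}"

definition fit :: "'a set \<Rightarrow> real \<Rightarrow> 'a set \<Rightarrow> 'a \<Rightarrow> 'a \<Rightarrow> real" where
  "fit S \<delta> X v u = (if v \<in> X \<and> u \<in> S then 1 + \<delta> else 1)"

definition choose_prob ::
  "'a set \<Rightarrow> ('a \<times> 'a) set \<Rightarrow> ('a \<times> 'a \<Rightarrow> real) \<Rightarrow> 'a set \<Rightarrow> real \<Rightarrow> 'a set \<Rightarrow> 'a \<Rightarrow> 'a \<Rightarrow> real" where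
  "choose_prob V E w S \<delta> X u v =
     fit S \<delta> X v u * w (v, u) / (\<Sum>x\<in>in_nbrs V E u. fit S \<delta> X x u * w (x, u))"

definition upd_conf :: "'a set \<Rightarrow> 'a \<Rightarrow> 'a \<Rightarrow> 'a set" where
  "upd_conf X u v = (if v \<in> X then insert u X else X - {u})"

text \<open>hit_within V E w S \<delta> t X = P[\<exists>s \<le> t. X_s = V | X_0 = X].\<close>
fun hit_within ::
  "'a set \<Rightarrow> ('a \<times> 'a) set \<Rightarrow> ('a \<times> 'a \<Rightarrow> real) \<Rightarrow> 'a set \<Rightarrow> real \<Rightarrow> nat \<Rightarrow> 'a set \<Rightarrow> real" where
  "hit_within V E w S \<delta> 0 X = (if X = V then 1 else 0)"
| "hit_within V E w S \<delta> (Suc t) X =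
     (if X = V then 1 else
        (\<Sum>u\<in>V. (1 / real (card V)) *
           (\<Sum>v\<in>in_nbrs V E u. choose_prob V E w S \<delta> X u v *
               hit_within V E w S \<delta> t (upd_conf X u v))))"

text \<open>Fixation probability fp(G^S, \<delta>, X) = P[\<exists>t. X_t = V | X_0 = X]
  = lim_{t\<rightarrow>\<infinity>} P[\<exists>s \<le> t. X_s = V].\<close>
definition fp ::
  "'a set \<Rightarrow> ('a \<times> 'a) set \<Rightarrow> ('a \<times> 'a \<Rightarrow> real) \<Rightarrow> 'a set \<Rightarrow> real \<Rightarrow> 'a set \<Rightarrow> real" where
  "fp V E w S \<delta> X = lim (\<lambda>t. hit_within V E w S \<delta> t X)"

definition connected_graph :: "'a set \<Rightarrow> ('a \<times> 'a) set \<Rightarrow> bool" where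
  "connected_graph V E = (\<forall>u\<in>V. \<forall>v\<in>V. (u, v) \<in> E\<^sup>*)"

end

theory Submission imports Defs begin

text \<open>The fixation probability is harmonic for the one-step averaging operator of the
  process, so by the maximum principle it dominates every strictly subharmonic function.
  On configurations meeting \<open>S\<close> we use the barrier \<open>\<phi>(|X|)\<close> with
  \<open>\<phi> k = 1 - \<epsilon> (B\<^sup>n - B\<^sup>k)\<close>, where \<open>\<epsilon> = n / (1 + \<delta>)\<close>: connectivity gives a gain
  of a node with probability at least \<open>1 / n\<^sup>2\<close>, while the self-loop of a biased
  mutant keeps the probability of losing the last biased mutant below \<open>\<epsilon>\<close>. Hence the
  fixation probability is at least \<open>1 - \<epsilon> B\<^sup>n\<close>, which tends to \<open>1\<close> as \<open>\<delta> \<rightarrow> \<infinity>\<close>.\<close>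

lemma rtrancl_leaves_set:
  assumes "(x, y) \<in> r\<^sup>*" and "x \<in> A" and "y \<notin> A"
  shows "\<exists>a b. (a, b) \<in> r \<and> a \<in> A \<and> b \<notin> A"
  using assms by (induction rule: rtrancl_induct) blast+

locale positional_voter =
  fixes V :: "'a set" and E :: "('a \<times> 'a) set" and w :: "'a \<times> 'a \<Rightarrow> real"
    and S :: "'a set" and \<delta> :: real
  assumes finite_V: "finite V" and V_nonempty: "V \<noteq> {}"
    and self_loops: "\<And>u. u \<in> V \<Longrightarrow> (u, u) \<in> E"
    and weights_pos: "\<And>e. e \<in> E \<Longrightarrow> 0 < w e"
    and bias_nonneg: "0 \<le> \<delta>"
begin

definition step_mean :: "('a set \<Rightarrow> real) \<Rightarrow> 'a set \<Rightarrow> real" where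
  "step_mean f X = (\<Sum>u\<in>V. 1 / real (card V) *
     (\<Sum>v\<in>in_nbrs V E u. choose_prob V E w S \<delta> X u v * f (upd_conf X u v)))"

lemma finite_in_nbrs: "finite (in_nbrs V E u)"
  using finite_V by (simp add: in_nbrs_def)

lemma self_in_nbrs: "u \<in> V \<Longrightarrow> u \<in> in_nbrs V E u"
  using self_loops by (simp add: in_nbrs_def)

lemma card_in_nbrs_le: "card (in_nbrs V E u) \<le> card V"
  using finite_V by (intro card_mono) (auto simp: in_nbrs_def)

lemma fit_ge_one: "1 \<le> fit S \<delta> X v u"
  using bias_nonneg by (simp add: fit_def)

lemma fitness_total_pos: "u \<in> V \<Longrightarrow> 0 < (\<Sum>x\<in>in_nbrs V E u. fit S \<delta> X x u * w (x, u))"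
proof (rule sum_pos2[OF finite_in_nbrs])
  show "x \<in> in_nbrs V E u \<Longrightarrow> 0 \<le> fit S \<delta> X x u * w (x, u)" for x
    using fit_ge_one[of X x u] weights_pos[of "(x, u)"] by (simp add: in_nbrs_def)
  assume "u \<in> V"
  then show "0 < fit S \<delta> X u u * w (u, u)"
    using fit_ge_one[of X u u] weights_pos self_loops by simp
qed (use self_in_nbrs in auto)

lemma choose_prob_nonneg: "v \<in> in_nbrs V E u \<Longrightarrow> 0 \<le> choose_prob V E w S \<delta> X u v"
  unfolding choose_prob_def using fit_ge_one[of X] weights_pos
  by (intro divide_nonneg_nonneg sum_nonneg mult_nonneg_nonneg)
    (auto simp: in_nbrs_def intro: order_trans[of 0 1] less_imp_le)

lemma sum_choose_prob: "u \<in> V \<Longrightarrow> (\<Sum>v\<in>in_nbrs V E u. choose_prob V E w S \<delta> X u v) = 1"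
  unfolding choose_prob_def sum_divide_distrib[symmetric]
  using fitness_total_pos[of u X] by simp

lemma step_mean_const [simp]: "step_mean (\<lambda>_. c) X = c"
proof -
  have "step_mean (\<lambda>_. c) X = (\<Sum>u\<in>V. c / real (card V))"
    unfolding step_mean_def
    by (intro sum.cong) (simp_all flip: sum_distrib_right add: sum_choose_prob)
  also have "\<dots> = c"
    using finite_V V_nonempty by simp
  finally show ?thesis .
qed

lemma step_mean_add: "step_mean (\<lambda>Y. f Y + g Y) X = step_mean f X + step_mean g X"
  unfolding step_mean_def by (simp add: algebra_simps sum.distrib)

lemma step_mean_diff: "step_mean (\<lambda>Y. f Y - g Y) X = step_mean f X - step_mean g X"
  unfolding step_mean_def by (simp add: algebra_simps sum_subtractf)

lemma step_mean_cmult: "step_mean (\<lambda>Y. c * f Y) X = c * step_mean f X"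
  unfolding step_mean_def by (simp add: algebra_simps sum_distrib_left)

lemma step_mean_mono:
  assumes "\<And>u v. u \<in> V \<Longrightarrow> v \<in> in_nbrs V E u \<Longrightarrow> f (upd_conf X u v) \<le> g (upd_conf X u v)"
  shows "step_mean f X \<le> step_mean g X"
  unfolding step_mean_def using assms choose_prob_nonneg
  by (intro sum_mono mult_left_mono) auto

lemma step_mean_term_le:
  assumes nonneg: "\<And>u v. u \<in> V \<Longrightarrow> v \<in> in_nbrs V E u \<Longrightarrow> 0 \<le> f (upd_conf X u v)"
    and u: "u \<in> V" and v: "v \<in> in_nbrs V E u"
  shows "choose_prob V E w S \<delta> X u v * f (upd_conf X u v) / real (card V) \<le> step_mean f X"
proof -
  let ?inner = "\<lambda>u. \<Sum>v\<in>in_nbrs V E u. choose_prob V E w S \<delta> X u v * f (upd_conf X u v)"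
  have inner_nonneg: "u \<in> V \<Longrightarrow> 0 \<le> ?inner u" for u
    using nonneg choose_prob_nonneg by (intro sum_nonneg mult_nonneg_nonneg) auto
  have "choose_prob V E w S \<delta> X u v * f (upd_conf X u v) \<le> ?inner u"
    using nonneg choose_prob_nonneg u v by (intro member_le_sum finite_in_nbrs) auto
  also have "?inner u / real (card V) = 1 / real (card V) * ?inner u"
    by simp
  also have "\<dots> \<le> step_mean f X"
    unfolding step_mean_def using inner_nonneg u
    by (intro member_le_sum finite_V) auto
  finally show ?thesis
    by (simp add: divide_right_mono)
qed

lemma tendsto_step_mean:
  "(\<And>Y. (\<lambda>t. F t Y) \<longlonglongrightarrow> f Y) \<Longrightarrow> (\<lambda>t. step_mean (F t) X) \<longlonglongrightarrow> step_mean f X"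
  unfolding step_mean_def by (intro tendsto_intros)

text \<open>Maximum principle: at a minimum of \<open>f - g\<close> on \<open>D\<close> the averaging step would
  strictly increase \<open>g\<close> but not \<open>f\<close>.\<close>
lemma superharmonic_ge_subharmonic:
  assumes "finite D"
    and super: "\<And>X. X \<in> D \<Longrightarrow> step_mean f X \<le> f X"
    and sub: "\<And>X. X \<in> D \<Longrightarrow> g X < step_mean g X"
    and outside: "\<And>X. X \<notin> D \<Longrightarrow> g X \<le> f X"
  shows "g X \<le> f X"
proof (rule ccontr)
  assume "\<not> g X \<le> f X"
  with outside have "X \<in> D" "f X - g X < 0" by auto
  define X0 where "X0 = arg_min_on (\<lambda>Y. f Y - g Y) D"
  have X0: "X0 \<in> D" and min: "\<And>Y. Y \<in> D \<Longrightarrow> f X0 - g X0 \<le> f Y - g Y"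
    using arg_min_if_finite[OF \<open>finite D\<close>, of "\<lambda>Y. f Y - g Y"] \<open>X \<in> D\<close>
    unfolding X0_def by (auto simp: not_less)
  have neg: "f X0 - g X0 < 0"
    using min[OF \<open>X \<in> D\<close>] \<open>f X - g X < 0\<close> by linarith
  define m where "m = f X0 - g X0"
  have "g Y + m \<le> f Y" for Y
    using min[of Y] outside[of Y] neg unfolding m_def by (cases "Y \<in> D") auto
  then have "step_mean (\<lambda>Y. g Y + m) X0 \<le> step_mean f X0"
    by (intro step_mean_mono)
  then have "step_mean g X0 + m \<le> f X0"
    using super[OF X0] by (simp add: step_mean_add)
  with sub[OF X0] show False
    unfolding m_def by simp
qed

lemma hit_within_Suc [simp]:
  "hit_within V E w S \<delta> (Suc t) X = (if X = V then 1 else step_mean (hit_within V E w S \<delta> t) X)"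
  by (simp add: step_mean_def)

declare hit_within.simps(2) [simp del]

lemma hit_within_bounds: "0 \<le> hit_within V E w S \<delta> t X \<and> hit_within V E w S \<delta> t X \<le> 1"
proof (induction t arbitrary: X)
  case (Suc t)
  have "step_mean (\<lambda>_. 0) X \<le> step_mean (hit_within V E w S \<delta> t) X"
    and "step_mean (hit_within V E w S \<delta> t) X \<le> step_mean (\<lambda>_. 1) X"
    using Suc.IH by (intro step_mean_mono; simp)+
  then show ?case
    by simp
qed simp

lemma hit_within_mono: "hit_within V E w S \<delta> t X \<le> hit_within V E w S \<delta> (Suc t) X"
proof (induction t arbitrary: X)
  case 0
  then show ?case
    using hit_within_bounds[of "Suc 0" X] by (cases "X = V") simp_all
next
  case (Suc t)
  then show ?case
    by (simp only: hit_within_Suc[of "Suc t"] hit_within_Suc[of t]) (auto intro: step_mean_mono)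
qed

lemma hit_within_tendsto_fp: "(\<lambda>t. hit_within V E w S \<delta> t X) \<longlonglongrightarrow> fp V E w S \<delta> X"
proof -
  have "convergent (\<lambda>t. hit_within V E w S \<delta> t X)"
    using hit_within_bounds hit_within_mono
    by (intro Bseq_monoseq_convergent BseqI'[of _ 1]) (auto simp: monoseq_Suc)
  then show ?thesis
    unfolding fp_def by (simp add: convergent_LIMSEQ_iff)
qed

lemma fp_bounds: "0 \<le> fp V E w S \<delta> X \<and> fp V E w S \<delta> X \<le> 1"
  using hit_within_tendsto_fp[of X] hit_within_bounds[of _ X]
  by (meson LIMSEQ_le_const LIMSEQ_le_const2)

lemma fp_full: "fp V E w S \<delta> V = 1"
proof -
  have "hit_within V E w S \<delta> t V = 1" for t
    by (cases t) auto
  then show ?thesis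
    using hit_within_tendsto_fp[of V] by (simp add: LIMSEQ_const_iff)
qed

lemma fp_step_mean:
  assumes "X \<noteq> V"
  shows "fp V E w S \<delta> X = step_mean (fp V E w S \<delta>) X"
proof (rule LIMSEQ_unique)
  show "(\<lambda>t. hit_within V E w S \<delta> (Suc t) X) \<longlonglongrightarrow> fp V E w S \<delta> X"
    by (rule LIMSEQ_Suc[OF hit_within_tendsto_fp])
  show "(\<lambda>t. hit_within V E w S \<delta> (Suc t) X) \<longlonglongrightarrow> step_mean (fp V E w S \<delta>) X"
    using assms tendsto_step_mean[of "\<lambda>t. hit_within V E w S \<delta> t", OF hit_within_tendsto_fp]
    by simp
qed

end

locale unweighted_voter = positional_voter V E "\<lambda>_. 1" S \<delta>
  for V :: "'a set" and E :: "('a \<times> 'a) set" and S :: "'a set" and \<delta> :: real +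
  assumes edges_in_V: "E \<subseteq> V \<times> V" and connected: "connected_graph V E"
begin

lemma choose_prob_ge_if_in_conf:
  assumes v: "v \<in> X" and vu: "v \<in> in_nbrs V E u"
  shows "1 / real (card V) \<le> choose_prob V E (\<lambda>_. 1) S \<delta> X u v"
proof -
  let ?N = "in_nbrs V E u" and ?f = "fit S \<delta> X v u"
  have "u \<in> V"
    using vu edges_in_V by (auto simp: in_nbrs_def)
  then have total_pos: "0 < (\<Sum>x\<in>?N. fit S \<delta> X x u)"
    using fitness_total_pos[of u X] by simp
  have "(\<Sum>x\<in>?N. fit S \<delta> X x u) \<le> (\<Sum>x\<in>?N. ?f)"
    using v bias_nonneg by (intro sum_mono) (simp add: fit_def)
  then have total_le: "(\<Sum>x\<in>?N. fit S \<delta> X x u) \<le> real (card ?N) * ?f"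
    by simp
  have card_N: "0 < card ?N"
    using vu finite_in_nbrs card_gt_0_iff by blast
  have "1 / real (card V) \<le> 1 / real (card ?N)"
    using card_N card_in_nbrs_le by (simp add: frac_le)
  also have "\<dots> = ?f / (real (card ?N) * ?f)"
    using fit_ge_one[of X v u] by simp
  also have "\<dots> \<le> ?f / (\<Sum>x\<in>?N. fit S \<delta> X x u)"
    using total_le total_pos fit_ge_one[of X v u] by (intro divide_left_mono) auto
  also have "\<dots> = choose_prob V E (\<lambda>_. 1) S \<delta> X u v"
    by (simp add: choose_prob_def)
  finally show ?thesis .
qed

lemma choose_prob_le_if_biased:
  assumes "u \<in> V" "u \<in> X" "u \<in> S" "v \<notin> X"
  shows "choose_prob V E (\<lambda>_. 1) S \<delta> X u v \<le> 1 / (1 + \<delta>)"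
proof -
  have "1 + \<delta> = fit S \<delta> X u u"
    using assms by (simp add: fit_def)
  also have "\<dots> \<le> (\<Sum>x\<in>in_nbrs V E u. fit S \<delta> X x u)"
    using self_in_nbrs[OF \<open>u \<in> V\<close>] fit_ge_one[of X]
    by (intro member_le_sum finite_in_nbrs) (auto intro: order_trans[of 0 1])
  finally have "1 + \<delta> \<le> (\<Sum>x\<in>in_nbrs V E u. fit S \<delta> X x u)" .
  then have "1 / (\<Sum>x\<in>in_nbrs V E u. fit S \<delta> X x u) \<le> 1 / (1 + \<delta>)"
    using bias_nonneg by (intro divide_left_mono) auto
  then show ?thesis
    using \<open>v \<notin> X\<close> by (simp add: choose_prob_def fit_def)
qed

lemma step_mean_gain_ge:
  assumes "X \<subseteq> V" "X \<noteq> {}" "X \<noteq> V"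
  shows "1 / real (card V) ^ 2 \<le> step_mean (\<lambda>Y. of_bool (card Y = Suc (card X))) X"
proof -
  obtain x y where "x \<in> X" "y \<in> V" "y \<notin> X"
    using assms by blast
  then have "(x, y) \<in> E\<^sup>*"
    using assms connected by (auto simp: connected_graph_def)
  from rtrancl_leaves_set[OF this \<open>x \<in> X\<close> \<open>y \<notin> X\<close>]
  obtain v u where "(v, u) \<in> E" "v \<in> X" "u \<notin> X"
    by blast
  then have u: "u \<in> V" and vu: "v \<in> in_nbrs V E u"
    using edges_in_V by (auto simp: in_nbrs_def)
  have "finite X"
    using assms(1) finite_V finite_subset by blast
  with \<open>v \<in> X\<close> \<open>u \<notin> X\<close> have gain: "card (upd_conf X u v) = Suc (card X)"
    by (simp add: upd_conf_def)
  have "1 / real (card V) ^ 2 = 1 / real (card V) / real (card V)"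
    by (simp add: power2_eq_square)
  also have "\<dots> \<le> choose_prob V E (\<lambda>_. 1) S \<delta> X u v
      * of_bool (card (upd_conf X u v) = Suc (card X)) / real (card V)"
    using choose_prob_ge_if_in_conf[OF \<open>v \<in> X\<close> vu] gain
    by (intro divide_right_mono) auto
  also have "\<dots> \<le> step_mean (\<lambda>Y. of_bool (card Y = Suc (card X))) X"
    using u vu by (intro step_mean_term_le) auto
  finally show ?thesis .
qed

lemma step_mean_biased_loss_le:
  assumes "X \<inter> S \<noteq> {}"
  shows "step_mean (\<lambda>Y. of_bool (Y \<inter> S = {})) X \<le> real (card V) / (1 + \<delta>)"
proof -
  have term_le: "choose_prob V E (\<lambda>_. 1) S \<delta> X u v * of_bool (upd_conf X u v \<inter> S = {}) \<le> 1 / (1 + \<delta>)"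
    if "u \<in> V" for u v
  proof (cases "upd_conf X u v \<inter> S = {}")
    case True
    with assms have "u \<in> X" "u \<in> S" "v \<notin> X"
      by (auto simp: upd_conf_def split: if_splits)
    with True \<open>u \<in> V\<close> show ?thesis
      using choose_prob_le_if_biased by simp
  qed (use bias_nonneg in simp)
  have inner_le: "(\<Sum>v\<in>in_nbrs V E u. choose_prob V E (\<lambda>_. 1) S \<delta> X u v
      * of_bool (upd_conf X u v \<inter> S = {})) \<le> real (card V) / (1 + \<delta>)" if "u \<in> V" for u
  proof -
    have "(\<Sum>v\<in>in_nbrs V E u. choose_prob V E (\<lambda>_. 1) S \<delta> X u v
        * of_bool (upd_conf X u v \<inter> S = {})) \<le> (\<Sum>v\<in>in_nbrs V E u. 1 / (1 + \<delta>))"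
      using term_le[OF that] by (intro sum_mono)
    also have "\<dots> \<le> real (card V) / (1 + \<delta>)"
      using card_in_nbrs_le[of u] bias_nonneg by (simp add: divide_right_mono)
    finally show ?thesis .
  qed
  have "step_mean (\<lambda>Y. of_bool (Y \<inter> S = {})) X \<le> (\<Sum>u\<in>V. 1 / real (card V) * (real (card V) / (1 + \<delta>)))"
    unfolding step_mean_def using inner_le by (intro sum_mono mult_left_mono) auto
  also have "\<dots> = real (card V) / (1 + \<delta>)"
    using finite_V V_nonempty by simp
  finally show ?thesis .
qed

text \<open>With \<open>B = 4 n\<^sup>2\<close> one gain (probability \<open>\<ge> 1 / n\<^sup>2\<close>) outweighs a loss and the
  loss of the last biased node (probability \<open>\<le> \<epsilon>\<close>) together.\<close>

definition barrier_base :: real where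
  "barrier_base = 4 * real (card V) ^ 2"

definition barrier_scale :: real where
  "barrier_scale = real (card V) / (1 + \<delta>)"

definition barrier :: "nat \<Rightarrow> real" where
  "barrier k = 1 - barrier_scale * (barrier_base ^ card V - barrier_base ^ k)"

definition barrier_conf :: "'a set \<Rightarrow> real" where
  "barrier_conf Y = (if Y \<subseteq> V \<and> Y \<inter> S \<noteq> {} then barrier (card Y) else 0)"

lemma barrier_scale_pos: "0 < barrier_scale"
  using finite_V V_nonempty bias_nonneg by (simp add: barrier_scale_def card_gt_0_iff)

lemma barrier_base_ge: "3 * real (card V) ^ 2 \<le> barrier_base - 1" "1 \<le> barrier_base"
proof -
  have "1 \<le> real (card V)"
    using finite_V V_nonempty by (simp add: Suc_le_eq card_gt_0_iff)
  then have "1 \<le> real (card V) ^ 2"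
    by simp
  then show "3 * real (card V) ^ 2 \<le> barrier_base - 1" "1 \<le> barrier_base"
    by (simp_all add: barrier_base_def)
qed

lemma barrier_ge: "1 - barrier_scale * barrier_base ^ card V \<le> barrier k"
  using barrier_scale_pos barrier_base_ge by (simp add: barrier_def)

lemma barrier_Suc: "barrier (Suc k) = barrier k + barrier_scale * barrier_base ^ k * (barrier_base - 1)"
  by (simp add: barrier_def algebra_simps)

lemma barrier_conf_ge:
  assumes "Y \<subseteq> V" and gain: "card Y = Suc (card X) \<Longrightarrow> X \<subseteq> Y" and "X \<inter> S \<noteq> {}"
  shows "1 - barrier_scale * barrier_base ^ card V
      + barrier_scale * barrier_base ^ card X * (barrier_base - 1) * of_bool (card Y = Suc (card X))
      - of_bool (Y \<inter> S = {}) \<le> barrier_conf Y"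
proof (cases "card Y = Suc (card X)")
  case True
  with gain assms have "barrier_conf Y = barrier (Suc (card X))"
    unfolding barrier_conf_def by auto
  with True show ?thesis
    using barrier_ge[of "card X"] barrier_Suc[of "card X"] by simp
next
  case False
  have "0 \<le> barrier_scale * barrier_base ^ card V"
    using barrier_scale_pos barrier_base_ge(2) by simp
  with False show ?thesis
    using barrier_ge[of "card Y"] \<open>Y \<subseteq> V\<close> unfolding barrier_conf_def by simp
qed

lemma barrier_conf_strictly_subharmonic:
  assumes X: "X \<subseteq> V" "X \<inter> S \<noteq> {}" "X \<noteq> V"
  shows "barrier_conf X < step_mean barrier_conf X"
proof -
  let ?\<epsilon> = barrier_scale and ?B = barrier_base and ?k = "card X"
  let ?gain = "\<lambda>Y. of_bool (card Y = Suc ?k) :: real" and ?miss = "\<lambda>Y. of_bool (Y \<inter> S = {}) :: real"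
  define D where "D = ?\<epsilon> * ?B ^ ?k * (?B - 1)"
  have "finite X"
    using X(1) finite_V finite_subset by blast
  have upd_gain: "card (upd_conf X u v) = Suc ?k \<Longrightarrow> X \<subseteq> upd_conf X u v" for u v
    using \<open>finite X\<close> card_Diff1_le[of X u] by (auto simp: upd_conf_def split: if_splits)
  have "step_mean (\<lambda>Y. 1 - ?\<epsilon> * ?B ^ card V + D * ?gain Y - ?miss Y) X \<le> step_mean barrier_conf X"
    unfolding D_def using X(1,2) upd_gain
    by (intro step_mean_mono barrier_conf_ge) (auto simp: upd_conf_def)
  then have mean_ge: "1 - ?\<epsilon> * ?B ^ card V + D * step_mean ?gain X - step_mean ?miss X
      \<le> step_mean barrier_conf X"
    by (simp add: step_mean_add step_mean_diff step_mean_cmult)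
  have n_pos: "0 < real (card V)"
    using finite_V V_nonempty by (simp add: card_gt_0_iff)
  have D_ge: "3 * real (card V) ^ 2 * (?\<epsilon> * ?B ^ ?k) \<le> D"
    unfolding D_def using barrier_base_ge barrier_scale_pos
    by (subst mult.commute) (intro mult_left_mono; simp)
  then have "3 * (?\<epsilon> * ?B ^ ?k) \<le> D / real (card V) ^ 2"
    using n_pos by (simp add: field_simps)
  also have "\<dots> = D * (1 / real (card V) ^ 2)"
    by simp
  also have "\<dots> \<le> D * step_mean ?gain X"
  proof (rule mult_left_mono)
    show "1 / real (card V) ^ 2 \<le> step_mean ?gain X"
      using step_mean_gain_ge X by auto
    have "0 \<le> 3 * real (card V) ^ 2 * (?\<epsilon> * ?B ^ ?k)"
      using barrier_scale_pos barrier_base_ge(2) by simp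
    with D_ge show "0 \<le> D"
      by linarith
  qed
  finally have "3 * (?\<epsilon> * ?B ^ ?k) \<le> D * step_mean ?gain X" .
  moreover have "step_mean ?miss X \<le> ?\<epsilon>"
    using step_mean_biased_loss_le[OF X(2)] by (simp add: barrier_scale_def)
  moreover have "?\<epsilon> \<le> ?\<epsilon> * ?B ^ ?k"
    using barrier_scale_pos barrier_base_ge(2) by simp
  moreover have "barrier_conf X = 1 - ?\<epsilon> * ?B ^ card V + ?\<epsilon> * ?B ^ ?k"
    using X by (simp add: barrier_conf_def barrier_def algebra_simps)
  ultimately show ?thesis
    using mean_ge barrier_scale_pos by linarith
qed

lemma fp_ge_barrier_conf: "barrier_conf X \<le> fp V E (\<lambda>_. 1) S \<delta> X"
proof (rule superharmonic_ge_subharmonic[where D = "{Y. Y \<subseteq> V \<and> Y \<inter> S \<noteq> {} \<and> Y \<noteq> V}"])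
  show "finite {Y. Y \<subseteq> V \<and> Y \<inter> S \<noteq> {} \<and> Y \<noteq> V}"
    using finite_V by (auto intro: finite_subset[of _ "Pow V"])
  show "step_mean (fp V E (\<lambda>_. 1) S \<delta>) Y \<le> fp V E (\<lambda>_. 1) S \<delta> Y"
    if "Y \<in> {Y. Y \<subseteq> V \<and> Y \<inter> S \<noteq> {} \<and> Y \<noteq> V}" for Y
    using that fp_step_mean by simp
  show "barrier_conf Y < step_mean barrier_conf Y"
    if "Y \<in> {Y. Y \<subseteq> V \<and> Y \<inter> S \<noteq> {} \<and> Y \<noteq> V}" for Y
    using that barrier_conf_strictly_subharmonic by simp
  show "barrier_conf Y \<le> fp V E (\<lambda>_. 1) S \<delta> Y"
    if "Y \<notin> {Y. Y \<subseteq> V \<and> Y \<inter> S \<noteq> {} \<and> Y \<noteq> V}" for Y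
    using that fp_bounds[of Y] fp_full by (auto simp: barrier_conf_def barrier_def)
qed

lemma fixation_lower_bound:
  assumes "X \<subseteq> V" "X \<inter> S \<noteq> {}"
  shows "1 - real (card V) * (4 * real (card V) ^ 2) ^ card V / (1 + \<delta>) \<le> fp V E (\<lambda>_. 1) S \<delta> X"
  using barrier_ge[of "card X"] fp_ge_barrier_conf[of X] assms
  by (simp add: barrier_conf_def barrier_scale_def barrier_base_def)

end

theorem mainTheorem3:
  fixes V :: "'a set" and E :: "('a \<times> 'a) set" and S X :: "'a set"
  assumes "finite V"
    and "E \<subseteq> V \<times> V"
    and "sym E"
    and "connected_graph V E"
    and "\<forall>u\<in>V. (u, u) \<in> E"
    and "S \<subseteq> V"
    and "X \<subseteq> V"
    and "X \<inter> S \<noteq> {}"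
  shows "((\<lambda>\<delta>. fp V E (\<lambda>_. 1) S \<delta> X) \<longlongrightarrow> 1) at_top"
proof (rule tendsto_sandwich)
  define c where "c = real (card V) * (4 * real (card V) ^ 2) ^ card V"
  have voter: "unweighted_voter V E \<delta>" if "0 \<le> \<delta>" for \<delta>
    using assms that by unfold_locales auto
  show "\<forall>\<^sub>F \<delta> in at_top. 1 - c / (1 + \<delta>) \<le> fp V E (\<lambda>_. 1) S \<delta> X"
    using eventually_ge_at_top[of "0::real"]
    by eventually_elim (use unweighted_voter.fixation_lower_bound[OF voter] assms in \<open>simp add: c_def\<close>)
  show "\<forall>\<^sub>F \<delta> in at_top. fp V E (\<lambda>_. 1) S \<delta> X \<le> 1"
    using eventually_ge_at_top[of "0::real"]
    by eventually_elim (use positional_voter.fp_bounds[OF unweighted_voter.axioms(1)[OF voter]] in blast)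
  have "((\<lambda>\<delta>::real. c / (1 + \<delta>)) \<longlongrightarrow> 0) at_top"
    by (intro tendsto_divide_0[OF tendsto_const] filterlim_at_top_imp_at_infinity
        filterlim_tendsto_add_at_top[OF tendsto_const filterlim_ident])
  then show "((\<lambda>\<delta>. 1 - c / (1 + \<delta>)) \<longlongrightarrow> 1) at_top"
    using tendsto_diff[OF tendsto_const, of _ 0 at_top 1] by simp
qed (rule tendsto_const)

end
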